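(* Let $f,g\in\mathbb{N}^\mathbb{N}$. If $f$ is computably traceable and $g$ is computably traceable relative to $f$, then $g$ is computably traceable.
   Context: For a finite set $\{x_1<\dots<x_n\}\subseteq\mathbb{N}$, its canonical index is $\prod_{i=1}^n p_i^{x_i}$ with $p_i$ the $i$-th prime; $D_m$ denotes the finite set with canonical index $m$. For $h\in\mathbb{N}^\mathbb{N}$, a function $g\in\mathbb{N}^\mathbb{N}$ is computably traceable relative to $h$ if for every nondecreasing unbounded computable function $\varphi:\mathbb{N}\to\mathbb{N}_{\ge1}$ and every function $g'\le_T g$ there is an $h$-computable function $r$ such that for all $n$, $\|D_{r(n)}\|\le\varphi(n)$ and $g'(n)\in D_{r(n)}$ (here $\|\cdot\|$ is cardinality). $g$ is computably traceable if it is computably traceable relative to a computable $h$ (i.e. $r$ can be taken computable). *)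

theory Defs
  imports "HOL-Computational_Algebra.Primes" "HOL-Library.Infinite_Set"
begin

text \<open>Kleene's characterisation of the total recursive
  functions: basic functions (zero, successor, projections, the function h), closed under
  composition, primitive recursion and the mu-operator applied to regular functions.\<close>

inductive rec_in :: "(nat \<Rightarrow> nat) \<Rightarrow> nat \<Rightarrow> (nat list \<Rightarrow> nat) \<Rightarrow> bool"
  for h :: "nat \<Rightarrow> nat" where
  zero: "rec_in h 0 (\<lambda>xs. 0)"
| succ: "rec_in h 1 (\<lambda>xs. Suc (hd xs))"
| proj: "i < n \<Longrightarrow> rec_in h n (\<lambda>xs. xs ! i)"
| orc: "rec_in h 1 (\<lambda>xs. h (hd xs))"
| comp: "rec_in h m f \<Longrightarrow> length gs = m \<Longrightarrow> (\<forall>g\<in>set gs. rec_in h n g)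
          \<Longrightarrow> rec_in h n (\<lambda>xs. f (map (\<lambda>g. g xs) gs))"
| prim: "rec_in h n f \<Longrightarrow> rec_in h (Suc (Suc n)) g
          \<Longrightarrow> rec_in h (Suc n) (\<lambda>xs. case xs of [] \<Rightarrow> 0
                 | y # ys \<Rightarrow> rec_nat (f ys) (\<lambda>k r. g (k # r # ys)) y)"
| mu: "rec_in h (Suc n) f \<Longrightarrow> (\<forall>ys. length ys = n \<longrightarrow> (\<exists>y. f (y # ys) = 0))
          \<Longrightarrow> rec_in h n (\<lambda>ys. LEAST y. f (y # ys) = 0)"

definition computable_in :: "(nat \<Rightarrow> nat) \<Rightarrow> (nat \<Rightarrow> nat) \<Rightarrow> bool" where
  "computable_in h g \<longleftrightarrow> (\<exists>F. rec_in h 1 F \<and> (\<forall>x. g x = F [x]))"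

definition computable :: "(nat \<Rightarrow> nat) \<Rightarrow> bool" where
  "computable g \<longleftrightarrow> computable_in (\<lambda>_. 0) g"

text \<open>The i-th prime, counting from 0: nth_prime 0 = 2.\<close>
definition nth_prime :: "nat \<Rightarrow> nat" where
  "nth_prime i = enumerate {p. prime p} i"

definition canon_index :: "nat set \<Rightarrow> nat" where
  "canon_index S = (\<Prod>i<card S. nth_prime i ^ (sorted_list_of_set S ! i))"

definition is_D :: "nat \<Rightarrow> nat set \<Rightarrow> bool" where
  "is_D m S \<longleftrightarrow> finite S \<and> canon_index S = m"

definition traceable_rel :: "(nat \<Rightarrow> nat) \<Rightarrow> (nat \<Rightarrow> nat) \<Rightarrow> bool" where
  "traceable_rel h g \<longleftrightarrow>
     (\<forall>\<phi> g'. (mono \<phi> \<and> (\<forall>k. \<exists>n. k \<le> \<phi> n) \<and> computable \<phi> \<and> (\<forall>n. 1 \<le> \<phi> n)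
              \<and> computable_in g g') \<longrightarrow>
        (\<exists>r. computable_in h r \<and>
             (\<forall>n. \<exists>S. is_D (r n) S \<and> card S \<le> \<phi> n \<and> g' n \<in> S)))"

definition computably_traceable :: "(nat \<Rightarrow> nat) \<Rightarrow> bool" where
  "computably_traceable g \<longleftrightarrow> (\<exists>h. computable h \<and> traceable_rel h g)"

end

theory Submission
  imports Defs
begin

text \<open>
  Let h be computable, f traceable
  relative to h, and g traceable relative to f.  Given an admissible bound phi and
  g' computable in g, put psi = isqrt o phi, which is again admissible.  Tracing g'
  relative to f with bound psi yields an f-computable r1; tracing r1 relative to h
  with bound psi yields an h-computable r2.  Then g'(n) lies in the union of those
  D_m with m in D_(r2 n) and |D_m| <= psi n.  This union has at most
  (psi n)^2 <= phi n elements, and its canonical index is h-computable from r2 n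
  and psi n, so it is the required h-computable trace.
\<close>

section \<open>Functions recursive in an oracle, up to agreement on n-tuples\<close>

text \<open>Working up to this agreement lets
  us freely rewrite terms that only differ on lists of the wrong length.\<close>
definition recfn :: "(nat \<Rightarrow> nat) \<Rightarrow> nat \<Rightarrow> (nat list \<Rightarrow> nat) \<Rightarrow> bool" where
  "recfn h n F \<longleftrightarrow> (\<exists>G. rec_in h n G \<and> (\<forall>xs. length xs = n \<longrightarrow> G xs = F xs))"

lemma recfn_cong: "recfn h n F \<Longrightarrow> (\<And>xs. length xs = n \<Longrightarrow> F xs = G xs) \<Longrightarrow> recfn h n G"
  unfolding recfn_def by metis

lemma recfn_rec: "rec_in h n F \<Longrightarrow> recfn h n F"
  unfolding recfn_def by blast

lemma recfn_list_witness:
  "(\<forall>g\<in>set gs. recfn h n g) \<Longrightarrow> \<exists>Gs. length Gs = length gs \<and> (\<forall>G\<in>set Gs. rec_in h n G) \<and>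
     (\<forall>xs. length xs = n \<longrightarrow> map (\<lambda>G. G xs) Gs = map (\<lambda>g. g xs) gs)"
proof (induction gs)
  case Nil
  then show ?case by auto
next
  case (Cons g gs)
  then obtain Gs where Gs: "length Gs = length gs" "\<forall>G\<in>set Gs. rec_in h n G"
     "\<forall>xs. length xs = n \<longrightarrow> map (\<lambda>G. G xs) Gs = map (\<lambda>g. g xs) gs" by auto
  from Cons.prems obtain G where "rec_in h n G" "\<forall>xs. length xs = n \<longrightarrow> G xs = g xs"
    unfolding recfn_def by auto
  with Gs show ?case by (intro exI[of _ "G # Gs"]) auto
qed

lemma recfn_comp:
  assumes "recfn h m f" "length gs = m" "\<forall>g\<in>set gs. recfn h n g"
  shows "recfn h n (\<lambda>xs. f (map (\<lambda>g. g xs) gs))"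
proof -
  obtain F where F: "rec_in h m F" "\<forall>xs. length xs = m \<longrightarrow> F xs = f xs"
    using assms(1) unfolding recfn_def by auto
  obtain Gs where Gs: "length Gs = length gs" "\<forall>G\<in>set Gs. rec_in h n G"
     "\<forall>xs. length xs = n \<longrightarrow> map (\<lambda>G. G xs) Gs = map (\<lambda>g. g xs) gs"
    using recfn_list_witness[OF assms(3)] by auto
  have "rec_in h n (\<lambda>xs. F (map (\<lambda>G. G xs) Gs))"
    by (rule rec_in.comp[OF F(1)]) (use Gs assms(2) in auto)
  moreover have "\<forall>xs. length xs = n \<longrightarrow> F (map (\<lambda>G. G xs) Gs) = f (map (\<lambda>g. g xs) gs)"
    using Gs F assms(2) by auto
  ultimately show ?thesis unfolding recfn_def by blast
qed

lemma recfn_prim: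
  assumes "recfn h n f" "recfn h (Suc (Suc n)) g"
  shows "recfn h (Suc n) (\<lambda>xs. rec_nat (f (tl xs)) (\<lambda>k r. g (k # r # tl xs)) (hd xs))"
proof -
  obtain F where F: "rec_in h n F" "\<forall>xs. length xs = n \<longrightarrow> F xs = f xs"
    using assms(1) unfolding recfn_def by auto
  obtain G where G: "rec_in h (Suc (Suc n)) G" "\<forall>xs. length xs = Suc (Suc n) \<longrightarrow> G xs = g xs"
    using assms(2) unfolding recfn_def by auto
  have R: "rec_in h (Suc n) (\<lambda>xs. case xs of [] \<Rightarrow> 0
                 | y # ys \<Rightarrow> rec_nat (F ys) (\<lambda>k r. G (k # r # ys)) y)"
    by (rule rec_in.prim[OF F(1) G(1)])
  have "rec_nat (F ys) (\<lambda>k r. G (k # r # ys)) y = rec_nat (f ys) (\<lambda>k r. g (k # r # ys)) y"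
    if "length ys = n" for y ys
    using that F G by (induction y) auto
  then show ?thesis unfolding recfn_def
    by (intro exI[of _ "(\<lambda>xs. case xs of [] \<Rightarrow> 0
                 | y # ys \<Rightarrow> rec_nat (F ys) (\<lambda>k r. G (k # r # ys)) y)"] conjI R)
       (auto simp: length_Suc_conv)
qed

lemma recfn_mu:
  assumes "recfn h (Suc n) f" "\<And>ys. length ys = n \<Longrightarrow> \<exists>y. f (y # ys) = 0"
  shows "recfn h n (\<lambda>ys. LEAST y. f (y # ys) = 0)"
proof -
  obtain F where F: "rec_in h (Suc n) F" "\<forall>xs. length xs = Suc n \<longrightarrow> F xs = f xs"
    using assms(1) unfolding recfn_def by auto
  have R: "rec_in h n (\<lambda>ys. LEAST y. F (y # ys) = 0)"
    by (rule rec_in.mu[OF F(1)]) (use F assms(2) in auto)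
  show ?thesis unfolding recfn_def
    by (intro exI[of _ "(\<lambda>ys. LEAST y. F (y # ys) = 0)"] conjI R) (use F in auto)
qed

lemma recfn_proj: "i < n \<Longrightarrow> recfn h n (\<lambda>xs. xs ! i)"
  by (rule recfn_rec) (rule rec_in.proj)

text \<open>The basic zero function has arity 0; composition lifts it to any arity.\<close>
lemma recfn_zero: "recfn h n (\<lambda>xs. 0)"
proof -
  have "recfn h n (\<lambda>xs. (\<lambda>xs. 0::nat) (map (\<lambda>g. g xs) ([]::(nat list \<Rightarrow> nat) list)))"
    by (rule recfn_comp[OF recfn_rec[OF rec_in.zero]]) auto
  then show ?thesis by simp
qed

lemma recfn_comp1: "recfn h 1 f \<Longrightarrow> recfn h n A \<Longrightarrow> recfn h n (\<lambda>xs. f [A xs])"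
  using recfn_comp[of h 1 f "[A]" n] by simp

lemma recfn_comp2:
  "recfn h 2 f \<Longrightarrow> recfn h n A \<Longrightarrow> recfn h n B \<Longrightarrow> recfn h n (\<lambda>xs. f [A xs, B xs])"
  using recfn_comp[of h 2 f "[A,B]" n] by simp

lemma recfn_Suc: "recfn h n A \<Longrightarrow> recfn h n (\<lambda>xs. Suc (A xs))"
  using recfn_comp1[OF recfn_rec[OF rec_in.succ]] by simp

lemma recfn_const: "recfn h n (\<lambda>xs. c)"
  by (induction c) (auto intro: recfn_zero recfn_Suc)

lemma recfn_bin:
  "recfn h 2 (\<lambda>xs. F (xs!0) (xs!1)) \<Longrightarrow> recfn h n A \<Longrightarrow> recfn h n B
    \<Longrightarrow> recfn h n (\<lambda>xs. F (A xs) (B xs))"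
  using recfn_comp2[of h "\<lambda>xs. F (xs!0) (xs!1)" n A B] by simp

lemma recfn_un: "recfn h 1 (\<lambda>xs. F (xs!0)) \<Longrightarrow> recfn h n A \<Longrightarrow> recfn h n (\<lambda>xs. F (A xs))"
  using recfn_comp1[of h "\<lambda>xs. F (xs!0)" n A] by simp

lemma recfn_reindex:
  assumes "recfn h m F" "\<forall>i<m. idx i < n"
  shows "recfn h n (\<lambda>xs. F (map (\<lambda>i. xs ! idx i) [0..<m]))"
proof -
  have "recfn h n (\<lambda>xs. F (map (\<lambda>g. g xs) (map (\<lambda>i xs. xs ! idx i) [0..<m])))"
    by (rule recfn_comp[OF assms(1)]) (use assms(2) in \<open>auto intro: recfn_proj\<close>)
  then show ?thesis by (simp add: comp_def)
qed

lemma recfn_subst_hd: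
  assumes "recfn h (Suc n) F" "recfn h n B"
  shows "recfn h n (\<lambda>xs. F (B xs # xs))"
proof -
  have "recfn h n (\<lambda>xs. F (map (\<lambda>g. g xs) (B # map (\<lambda>i xs. xs ! i) [0..<n])))"
    by (rule recfn_comp[OF assms(1)]) (use assms(2) in \<open>auto intro: recfn_proj\<close>)
  then show ?thesis
  proof (rule recfn_cong)
    fix xs :: "nat list" assume "length xs = n"
    then show "F (map (\<lambda>g. g xs) (B # map (\<lambda>i xs. xs ! i) [0..<n])) = F (B xs # xs)"
      using map_nth[of xs] by (simp add: comp_def)
  qed
qed

lemma recfn_recursion:
  assumes "recfn h n F0" "recfn h (Suc (Suc n)) G" "recfn h n B"
  shows "recfn h n (\<lambda>xs. rec_nat (F0 xs) (\<lambda>k r. G (k # r # xs)) (B xs))"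
  using recfn_subst_hd[OF recfn_prim[OF assms(1,2)] assms(3)] by simp

lemma recfn_tl:
  assumes "recfn h n A"
  shows "recfn h (Suc n) (\<lambda>zs. A (tl zs))"
proof -
  have "recfn h (Suc n) (\<lambda>zs. A (map (\<lambda>i. zs ! Suc i) [0..<n]))"
    by (rule recfn_reindex[OF assms]) auto
  then show ?thesis
  proof (rule recfn_cong)
    fix zs :: "nat list" assume "length zs = Suc n"
    then have "map (\<lambda>i. zs ! Suc i) [0..<n] = tl zs"
      by (intro nth_equalityI) (auto simp: nth_tl)
    then show "A (map (\<lambda>i. zs ! Suc i) [0..<n]) = A (tl zs)" by simp
  qed
qed

lemma recfn_tl_nth: "Suc j < n \<Longrightarrow> recfn h n (\<lambda>xs. tl xs ! j)"
  by (rule recfn_cong[OF recfn_proj[of "Suc j"]]) (auto simp: nth_tl)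

text \<open>Inserting a dummy second argument: needed to pass a function of
  (i, params) as the step of a primitive recursion over (i, accumulator, params).\<close>
lemma recfn_skip_second:
  assumes "recfn h (Suc n) P"
  shows "recfn h (Suc (Suc n)) (\<lambda>zs. P (zs!0 # tl (tl zs)))"
proof -
  have "recfn h (Suc (Suc n)) (\<lambda>zs. P (map (\<lambda>i. zs ! (if i = 0 then 0 else Suc i)) [0..<Suc n]))"
    by (rule recfn_reindex[OF assms]) auto
  then show ?thesis
  proof (rule recfn_cong)
    fix zs :: "nat list" assume "length zs = Suc (Suc n)"
    then obtain a b ws where zs: "zs = a # b # ws" "length ws = n"
      by (metis length_Suc_conv)
    have "map (\<lambda>i. zs ! (if i = 0 then 0 else Suc i)) [0..<Suc n] = a # ws"
      by (rule nth_equalityI) (auto simp: zs nth_Cons' simp del: upt_Suc)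
    then show "P (map (\<lambda>i. zs ! (if i = 0 then 0 else Suc i)) [0..<Suc n]) = P (zs!0 # tl (tl zs))"
      using zs(1) by simp
  qed
qed

section \<open>Recursive arithmetic\<close>

lemma recfn_add:
  assumes "recfn h n A" "recfn h n B"
  shows "recfn h n (\<lambda>xs. A xs + B xs)"
proof -
  have rec_eq: "rec_nat b (\<lambda>k r. Suc r) a = a + b" for a b :: nat
    by (induction a) auto
  have "recfn h 2 (\<lambda>xs. rec_nat (xs!1) (\<lambda>k r. Suc ((k#r#xs)!1)) (xs!0))"
    by (intro recfn_recursion recfn_proj recfn_Suc) simp_all
  then have "recfn h 2 (\<lambda>xs. xs!0 + xs!1)" by (rule recfn_cong) (use rec_eq in simp)
  then show ?thesis using assms by (rule recfn_bin)
qed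

lemma recfn_mult:
  assumes "recfn h n A" "recfn h n B"
  shows "recfn h n (\<lambda>xs. A xs * B xs)"
proof -
  have rec_eq: "rec_nat 0 (\<lambda>k r. r + b) a = a * b" for a b :: nat
    by (induction a) auto
  have "recfn h 2 (\<lambda>xs. rec_nat 0 (\<lambda>k r. (k#r#xs)!1 + (k#r#xs)!3) (xs!0))"
    by (intro recfn_recursion recfn_proj recfn_add recfn_const) simp_all
  then have "recfn h 2 (\<lambda>xs. xs!0 * xs!1)" by (rule recfn_cong) (use rec_eq in simp)
  then show ?thesis using assms by (rule recfn_bin)
qed

lemma recfn_pred:
  assumes "recfn h n A"
  shows "recfn h n (\<lambda>xs. A xs - 1)"
proof -
  have rec_eq: "rec_nat 0 (\<lambda>k r. k) a = a - 1" for a :: nat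
    by (cases a) auto
  have "recfn h 1 (\<lambda>xs. rec_nat 0 (\<lambda>k r. (k#r#xs)!0) (xs!0))"
    by (intro recfn_recursion recfn_proj recfn_const) simp_all
  then have "recfn h 1 (\<lambda>xs. xs!0 - 1)" by (rule recfn_cong) (use rec_eq in simp)
  then show ?thesis using assms by (rule recfn_un)
qed

lemma recfn_minus:
  assumes "recfn h n A" "recfn h n B"
  shows "recfn h n (\<lambda>xs. A xs - B xs)"
proof -
  have rec_eq: "rec_nat a (\<lambda>k r. r - 1) b = a - b" for a b :: nat
    by (induction b) auto
  have "recfn h 2 (\<lambda>xs. rec_nat (xs!0) (\<lambda>k r. (k#r#xs)!1 - 1) (xs!1))"
    by (intro recfn_recursion recfn_proj recfn_pred) simp_all
  then have "recfn h 2 (\<lambda>xs. xs!0 - xs!1)" by (rule recfn_cong) (use rec_eq in simp)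
  then show ?thesis using assms by (rule recfn_bin)
qed

lemma recfn_pow:
  assumes "recfn h n A" "recfn h n B"
  shows "recfn h n (\<lambda>xs. A xs ^ B xs)"
proof -
  have rec_eq: "rec_nat 1 (\<lambda>k r. r * a) b = a ^ b" for a b :: nat
    by (induction b) (simp_all add: algebra_simps)
  have "recfn h 2 (\<lambda>xs. rec_nat 1 (\<lambda>k r. (k#r#xs)!1 * (k#r#xs)!2) (xs!1))"
    by (intro recfn_recursion recfn_proj recfn_mult recfn_const) simp_all
  then have "recfn h 2 (\<lambda>xs. xs!0 ^ xs!1)" by (rule recfn_cong) (use rec_eq in simp)
  then show ?thesis using assms by (rule recfn_bin)
qed

lemma recfn_sum:
  assumes "recfn h (Suc n) (\<lambda>zs. F (zs!0) (tl zs))" "recfn h n B"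
  shows "recfn h n (\<lambda>xs. \<Sum>i<B xs. F i xs)"
proof -
  have S: "recfn h (Suc (Suc n)) (\<lambda>zs. F (zs!0) (tl (tl zs)))"
    using recfn_skip_second[OF assms(1)] by simp
  have rec_eq: "rec_nat 0 (\<lambda>k r. r + F k xs) b = (\<Sum>i<b. F i xs)" for b xs
    by (induction b) auto
  have "recfn h n (\<lambda>xs. rec_nat 0 (\<lambda>k r. (k#r#xs)!1 + F ((k#r#xs)!0) (tl (tl (k#r#xs)))) (B xs))"
    by (rule recfn_recursion[OF recfn_const _ assms(2)]) (intro recfn_add recfn_proj S, simp)
  then show ?thesis by (rule recfn_cong) (use rec_eq in simp)
qed

lemma recfn_prod:
  assumes "recfn h (Suc n) (\<lambda>zs. F (zs!0) (tl zs))" "recfn h n B"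
  shows "recfn h n (\<lambda>xs. \<Prod>i<B xs. F i xs)"
proof -
  have S: "recfn h (Suc (Suc n)) (\<lambda>zs. F (zs!0) (tl (tl zs)))"
    using recfn_skip_second[OF assms(1)] by simp
  have rec_eq: "rec_nat 1 (\<lambda>k r. r * F k xs) b = (\<Prod>i<b. F i xs)" for b xs
    by (induction b) (auto simp: mult.commute)
  have "recfn h n (\<lambda>xs. rec_nat 1 (\<lambda>k r. (k#r#xs)!1 * F ((k#r#xs)!0) (tl (tl (k#r#xs)))) (B xs))"
    by (rule recfn_recursion[OF recfn_const _ assms(2)]) (intro recfn_mult recfn_proj S, simp)
  then show ?thesis by (rule recfn_cong) (use rec_eq in simp)
qed

definition recpred :: "(nat \<Rightarrow> nat) \<Rightarrow> nat \<Rightarrow> (nat list \<Rightarrow> bool) \<Rightarrow> bool" where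
  "recpred h n P \<longleftrightarrow> recfn h n (\<lambda>xs. if P xs then 1 else 0)"

lemma recfn_if:
  assumes "recpred h n P" "recfn h n A" "recfn h n B"
  shows "recfn h n (\<lambda>xs. if P xs then A xs else B xs)"
proof -
  have "recfn h n (\<lambda>xs. (if P xs then 1 else 0) * A xs + (1 - (if P xs then 1 else 0)) * B xs)"
    using assms unfolding recpred_def by (intro recfn_add recfn_mult recfn_minus recfn_const)
  then show ?thesis by (rule recfn_cong) simp
qed

lemma recpred_le: "recfn h n A \<Longrightarrow> recfn h n B \<Longrightarrow> recpred h n (\<lambda>xs. A xs \<le> B xs)"
  unfolding recpred_def
  by (rule recfn_cong[where F="\<lambda>xs. 1 - (A xs - B xs)"]) (auto intro: recfn_minus recfn_const)

lemma recpred_not: "recpred h n P \<Longrightarrow> recpred h n (\<lambda>xs. \<not> P xs)"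
  unfolding recpred_def
  by (rule recfn_cong[where F="\<lambda>xs. 1 - (if P xs then 1 else 0)"]) (auto intro: recfn_minus recfn_const)

lemma recpred_conj: "recpred h n P \<Longrightarrow> recpred h n Q \<Longrightarrow> recpred h n (\<lambda>xs. P xs \<and> Q xs)"
  unfolding recpred_def
  by (rule recfn_cong[where F="\<lambda>xs. (if P xs then 1 else 0) * (if Q xs then 1 else 0)"])
     (auto intro: recfn_mult)

lemma recpred_disj: "recpred h n P \<Longrightarrow> recpred h n Q \<Longrightarrow> recpred h n (\<lambda>xs. P xs \<or> Q xs)"
  using recpred_not[OF recpred_conj[OF recpred_not recpred_not]] by simp

lemma recpred_less: "recfn h n A \<Longrightarrow> recfn h n B \<Longrightarrow> recpred h n (\<lambda>xs. A xs < B xs)"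
  using recpred_le[OF recfn_Suc] by (simp add: Suc_le_eq)

lemma recpred_eq:
  assumes "recfn h n A" "recfn h n B"
  shows "recpred h n (\<lambda>xs. A xs = B xs)"
proof -
  have "recpred h n (\<lambda>xs. A xs \<le> B xs \<and> B xs \<le> A xs)" by (intro recpred_conj recpred_le assms)
  then show ?thesis unfolding recpred_def by (rule recfn_cong) auto
qed

lemma indicator_sum_pos: "(0 < (\<Sum>i<(b::nat). if P i then 1 else (0::nat))) \<longleftrightarrow> (\<exists>i<b. P i)"
  by (induction b) (auto simp: less_Suc_eq)

lemma recpred_ex_less:
  assumes "recpred h (Suc n) (\<lambda>zs. P (zs!0) (tl zs))" "recfn h n B"
  shows "recpred h n (\<lambda>xs. \<exists>i<B xs. P i xs)"
proof -
  have "recfn h n (\<lambda>xs. \<Sum>i<B xs. if P i xs then 1 else 0)"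
    using assms unfolding recpred_def by (rule recfn_sum)
  then have "recpred h n (\<lambda>xs. 0 < (\<Sum>i<B xs. if P i xs then 1 else (0::nat)))"
    by (rule recpred_less[OF recfn_const])
  then show ?thesis by (simp only: indicator_sum_pos)
qed

lemma recfn_least:
  assumes "recpred h (Suc n) (\<lambda>zs. P (zs!0) (tl zs))" "\<And>xs. length xs = n \<Longrightarrow> \<exists>y. P y xs"
  shows "recfn h n (\<lambda>xs. LEAST y. P y xs)"
proof -
  have R: "recfn h (Suc n) (\<lambda>zs. if P (zs!0) (tl zs) then 0 else 1)"
    by (intro recfn_if assms(1) recfn_const)
  have "recfn h n (\<lambda>ys. LEAST y. (\<lambda>zs. if P (zs!0) (tl zs) then 0 else (1::nat)) (y # ys) = 0)"
    by (rule recfn_mu[OF R]) (simp add: assms(2))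
  then show ?thesis by (rule recfn_cong) (rule arg_cong[where f=Least], rule ext, simp)
qed

section \<open>Recursive number theory\<close>

text \<open>Divisibility is decidable: a cofactor, if any, is bounded by the dividend.\<close>
lemma dvd_iff_bounded_cofactor: "(a::nat) dvd b \<longleftrightarrow> (\<exists>k<Suc b. a * k = b)"
proof
  assume "a dvd b"
  then obtain k where k: "b = a * k" by auto
  show "\<exists>k<Suc b. a * k = b"
  proof (cases "b = 0")
    case False
    have "k dvd b" using k by simp
    then have "k < Suc b" using False by (simp add: dvd_imp_le le_imp_less_Suc)
    with k show ?thesis by auto
  qed auto
qed auto

lemma recpred_dvd:
  assumes "recfn h n A" "recfn h n B"
  shows "recpred h n (\<lambda>xs. A xs dvd B xs)"
  unfolding dvd_iff_bounded_cofactor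
  by (intro recpred_ex_less[where P="\<lambda>k xs. A xs * k = B xs"] recpred_eq recfn_mult recfn_tl
      assms recfn_proj recfn_Suc) simp

lemma prime_iff_bounded: "prime (p::nat) \<longleftrightarrow> 1 < p \<and> \<not> (\<exists>d<p. 2 \<le> d \<and> d dvd p)"
  unfolding prime_nat_iff' by auto

lemma recpred_prime:
  assumes "recfn h n A"
  shows "recpred h n (\<lambda>xs. prime (A xs))"
  unfolding prime_iff_bounded
  by (intro recpred_conj recpred_less recpred_not recpred_ex_less[where P="\<lambda>d xs. 2 \<le> d \<and> d dvd A xs"]
      recfn_const assms recpred_le recpred_dvd recfn_proj recfn_tl) simp_all

text \<open>The
  degenerate cases p \<le> 1 and m = 0, where it is 0, are folded into the search
  condition so that a witness always exists.\<close>
lemma multiplicity_as_Least: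
  "multiplicity p m = (LEAST e. p \<le> 1 \<or> m = 0 \<or> \<not> p ^ Suc e dvd (m::nat))"
proof (cases "p \<le> 1 \<or> m = 0")
  case True
  have "multiplicity p m = 0"
  proof (cases "m = 0")
    case False
    with True have "p = 0 \<or> p = 1" by auto
    then show ?thesis
      using False by (auto intro: not_dvd_imp_multiplicity_0 multiplicity_unit_left)
  qed simp
  moreover have "(LEAST e. p \<le> 1 \<or> m = 0 \<or> \<not> p ^ Suc e dvd m) = 0"
    by (rule Least_eq_0) (use True in blast)
  ultimately show ?thesis by simp
next
  case False
  then have m: "m \<noteq> 0" and u: "\<not> is_unit p" by auto
  have "(LEAST e. \<not> p ^ Suc e dvd m) = multiplicity p m"
  proof (rule Least_equality)
    show "\<not> p ^ Suc (multiplicity p m) dvd m"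
      using power_dvd_iff_le_multiplicity[OF m u, of "Suc (multiplicity p m)"] by simp
    show "multiplicity p m \<le> y" if "\<not> p ^ Suc y dvd m" for y
      using power_dvd_iff_le_multiplicity[OF m u, of "Suc y"] that by simp
  qed
  then show ?thesis using False by simp
qed

lemma recfn_multiplicity:
  assumes "recfn h n A" "recfn h n B"
  shows "recfn h n (\<lambda>xs. multiplicity (A xs) (B xs))"
  unfolding multiplicity_as_Least
proof (rule recfn_least[where P="\<lambda>e xs. A xs \<le> 1 \<or> B xs = 0 \<or> \<not> A xs ^ Suc e dvd B xs"])
  show "recpred h (Suc n) (\<lambda>zs. A (tl zs) \<le> 1 \<or> B (tl zs) = 0 \<or> \<not> A (tl zs) ^ Suc (zs ! 0) dvd B (tl zs))"
    by (intro recpred_disj recpred_le recpred_eq recpred_not recpred_dvd recfn_pow recfn_Suc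
        recfn_proj recfn_tl assms recfn_const) simp
next
  fix xs :: "nat list"
  show "\<exists>e. A xs \<le> 1 \<or> B xs = 0 \<or> \<not> A xs ^ Suc e dvd B xs"
  proof (cases "A xs \<le> 1 \<or> B xs = 0")
    case False
    have "B xs < 2 ^ B xs" by (rule less_exp)
    also have "\<dots> \<le> A xs ^ B xs" by (rule power_mono) (use False in simp_all)
    also have "\<dots> \<le> A xs ^ Suc (B xs)" by (rule power_increasing) (use False in simp_all)
    finally have "\<not> A xs ^ Suc (B xs) dvd B xs" using False by (auto dest: dvd_imp_le)
    then show ?thesis by blast
  qed auto
qed

lemma nth_prime_rec: "nth_prime i = rec_nat 2 (\<lambda>k r. LEAST p. r < p \<and> prime p) i"
proof (induction i)
  case 0
  have "(LEAST n::nat. n \<in> {p. prime p}) = 2"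
    by (rule Least_equality) (auto simp: prime_ge_2_nat)
  then show ?case by (simp add: nth_prime_def enumerate_0)
next
  case (Suc i)
  show ?case using Suc unfolding nth_prime_def
    by (simp add: enumerate_Suc''[OF primes_infinite] conj_commute)
qed

lemma recfn_nth_prime:
  assumes "recfn h n A"
  shows "recfn h n (\<lambda>xs. nth_prime (A xs))"
proof -
  have "recfn h 1 (\<lambda>xs. rec_nat 2 (\<lambda>k r. LEAST p. ((k#r#xs)!1) < p \<and> prime p) (xs!0))"
  proof (rule recfn_recursion[OF recfn_const _ recfn_proj])
    show "recfn h (Suc (Suc 1)) (\<lambda>zs. LEAST p. zs ! 1 < p \<and> prime p)"
    proof (rule recfn_least[where P="\<lambda>p zs. zs ! 1 < p \<and> prime p"])
      show "recpred h (Suc (Suc (Suc 1))) (\<lambda>zs'. tl zs' ! 1 < zs' ! 0 \<and> prime (zs' ! 0))"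
        by (intro recpred_conj recpred_less recpred_prime recfn_tl_nth recfn_proj) simp_all
      show "\<exists>y. xs ! 1 < y \<and> prime y" for xs :: "nat list"
        using bigger_prime[of "xs!1"] by blast
    qed
  qed simp
  then have "recfn h 1 (\<lambda>xs. nth_prime (xs!0))"
    by (rule recfn_cong) (simp add: nth_prime_rec)
  then show ?thesis using assms by (rule recfn_un)
qed

text \<open>Integer square root, used to split a size bound phi into psi * psi.\<close>
definition isqrt :: "nat \<Rightarrow> nat" where
  "isqrt x = (LEAST k. x < Suc k * Suc k)"

lemma recfn_isqrt:
  assumes "recfn h n A"
  shows "recfn h n (\<lambda>xs. isqrt (A xs))"
  unfolding isqrt_def
proof (rule recfn_least[where P="\<lambda>k xs. A xs < Suc k * Suc k"])
  show "recpred h (Suc n) (\<lambda>zs. A (tl zs) < Suc (zs ! 0) * Suc (zs ! 0))"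
    by (intro recpred_less recfn_mult recfn_Suc recfn_proj recfn_tl assms) simp_all
  show "\<exists>y. A xs < Suc y * Suc y" for xs
    by (rule exI[of _ "A xs"]) simp
qed

lemma isqrt_sq_le: "isqrt x * isqrt x \<le> x"
proof (cases "isqrt x")
  case (Suc j)
  then have "\<not> x < Suc j * Suc j" unfolding isqrt_def by (metis lessI not_less_Least)
  then show ?thesis using Suc by simp
qed simp

lemma isqrt_greatest: "k * k \<le> x \<Longrightarrow> k \<le> isqrt x"
proof (rule ccontr)
  assume a: "k * k \<le> x" "\<not> k \<le> isqrt x"
  then have "Suc (isqrt x) * Suc (isqrt x) \<le> k * k" by (intro mult_le_mono) simp_all
  moreover have "x < Suc (isqrt x) * Suc (isqrt x)"
    unfolding isqrt_def by (rule LeastI[of _ x]) simp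
  ultimately show False using a(1) by simp
qed

lemma isqrt_mono: "x \<le> y \<Longrightarrow> isqrt x \<le> isqrt y"
  by (rule isqrt_greatest) (use isqrt_sq_le[of x] in simp)

text \<open>Every computable function is computable relative to any oracle: the only
  oracle call of a rec_in derivation for the constant-zero oracle is replaced by zero.\<close>
lemma recfn_unrelativise: "rec_in (\<lambda>_. 0) n F \<Longrightarrow> recfn h n F"
proof (induction rule: rec_in.induct)
  case zero then show ?case by (rule recfn_rec[OF rec_in.zero])
next
  case succ then show ?case by (rule recfn_rec[OF rec_in.succ])
next
  case (proj i n) then show ?case by (rule recfn_proj)
next
  case orc then show ?case using recfn_zero by simp
next
  case (comp m f gs n) then show ?case by (intro recfn_comp) auto
next
  case (prim n f g)
  have "recfn h (Suc n) (\<lambda>xs. rec_nat (f (tl xs)) (\<lambda>k r. g (k # r # tl xs)) (hd xs))"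
    by (rule recfn_prim[OF prim.IH])
  then show ?case by (rule recfn_cong) (auto simp: length_Suc_conv)
next
  case (mu n f) then show ?case by (intro recfn_mu) auto
qed

lemma computable_in_iff_recfn: "computable_in h g \<longleftrightarrow> recfn h 1 (\<lambda>xs. g (xs!0))"
proof
  assume "computable_in h g"
  then obtain F where F: "rec_in h 1 F" "\<forall>x. g x = F [x]"
    unfolding computable_in_def by blast
  show "recfn h 1 (\<lambda>xs. g (xs!0))"
  proof (rule recfn_cong[OF recfn_rec[OF F(1)]])
    fix xs :: "nat list" assume "length xs = 1"
    then have "xs = [xs!0]" by (cases xs) auto
    then show "F xs = g (xs!0)" using F(2) by metis
  qed
next
  assume "recfn h 1 (\<lambda>xs. g (xs!0))"
  then show "computable_in h g"
    unfolding computable_in_def recfn_def by (metis One_nat_def length_Cons list.size(3) nth_Cons_0)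
qed

lemma computable_imp_recfn:
  assumes "computable g"
  shows "recfn h 1 (\<lambda>xs. g (xs!0))"
proof -
  obtain G where G: "rec_in (\<lambda>_. 0) 1 G" "\<forall>xs. length xs = 1 \<longrightarrow> G xs = g (xs!0)"
    using assms unfolding computable_def computable_in_iff_recfn recfn_def by blast
  show ?thesis using recfn_unrelativise[OF G(1)] by (rule recfn_cong) (use G(2) in blast)
qed

section \<open>Canonical indices\<close>

lemma nth_prime_prime: "prime (nth_prime i)"
  unfolding nth_prime_def using enumerate_in_set[OF primes_infinite] by simp

lemma nth_prime_inj: "nth_prime i = nth_prime j \<longleftrightarrow> i = j"
  unfolding nth_prime_def by (metis enumerate_mono primes_infinite less_irrefl nat_neq_iff)

lemma nth_prime_0: "nth_prime 0 = 2"
  by (simp add: nth_prime_rec)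

lemma canon_index_pos: "canon_index S > 0"
  unfolding canon_index_def
  by (rule prod_pos) (use nth_prime_prime prime_gt_0_nat in auto)

lemma multiplicity_prime_power:
  assumes "prime (p::nat)" "prime q"
  shows "multiplicity p (q ^ e) = (if p = q then e else 0)"
proof (cases "p = q")
  case True then show ?thesis using assms by (simp add: prime_imp_prime_elem)
next
  case False
  then have "\<not> p dvd q ^ e" using assms primes_dvd_imp_eq prime_dvd_power by blast
  then show ?thesis using False by (simp add: not_dvd_imp_multiplicity_0)
qed

lemma multiplicity_canon_index:
  assumes "prime p"
  shows "multiplicity p (canon_index S)
    = (\<Sum>i<card S. if p = nth_prime i then sorted_list_of_set S ! i else 0)"
  unfolding canon_index_def
proof (subst prime_elem_multiplicity_prod_distrib)
  show "prime_elem p" using assms by (simp add: prime_imp_prime_elem)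
  show "0 \<notin> (\<lambda>i. nth_prime i ^ sorted_list_of_set S ! i) ` {..<card S}"
    by (clarsimp simp: power_eq_0_iff) (metis nth_prime_prime not_prime_0)
qed (use assms in \<open>simp_all add: multiplicity_prime_power nth_prime_prime\<close>)

lemma multiplicity_nth_prime_canon_index:
  assumes "i < card S"
  shows "multiplicity (nth_prime i) (canon_index S) = sorted_list_of_set S ! i"
proof -
  have "(\<Sum>j<card S. if nth_prime i = nth_prime j then sorted_list_of_set S ! j else 0)
      = (\<Sum>j<card S. if i = j then sorted_list_of_set S ! j else 0)"
    by (simp add: nth_prime_inj)
  also have "\<dots> = sorted_list_of_set S ! i" using assms by simp
  finally show ?thesis using multiplicity_canon_index[OF nth_prime_prime] by simp
qed

text \<open>Exponents are bounded by the number itself, so decoding is a bounded search.\<close>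
lemma multiplicity_le_self:
  assumes "prime p"
  shows "multiplicity p m \<le> m"
proof (cases "m = 0")
  case False
  have "multiplicity p m < 2 ^ multiplicity p m" by (rule less_exp)
  also have "\<dots> \<le> p ^ multiplicity p m" by (rule power_mono) (use prime_ge_2_nat[OF assms] in auto)
  also have "\<dots> \<le> m" by (rule dvd_imp_le[OF multiplicity_dvd]) (use False in simp)
  finally show ?thesis by simp
qed simp

text \<open>On canonical indices this inverts canon_index, up to the
  empty set, whose index 1 decodes to the singleton of 0 (the exponent of 2 is
  included because the least element of a set may be 0).\<close>
definition decoded :: "nat \<Rightarrow> nat set" where
  "decoded m = {x. x = multiplicity 2 m \<or> (\<exists>p\<le>m. prime p \<and> p dvd m \<and> x = multiplicity p m)}"

lemma decoded_le: "x \<in> decoded m \<Longrightarrow> x \<le> m"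
  unfolding decoded_def using multiplicity_le_self two_is_prime_nat by auto

lemma decoded_subset: "decoded m \<subseteq> {..<Suc m}"
  using decoded_le by (auto simp: less_Suc_eq_le)

lemma finite_decoded: "finite (decoded m)"
  using decoded_subset finite_subset by blast

lemma sorted_list_facts:
  assumes "finite S"
  shows "set (sorted_list_of_set S) = S" "length (sorted_list_of_set S) = card S"
    and "sorted_wrt (<) (sorted_list_of_set S)"
  using assms by (auto simp: strict_sorted_list_of_set)

lemma decoded_canon_index:
  assumes "finite S"
  shows "decoded (canon_index S) = (if S = {} then {0} else S)"
proof (cases "S = {}")
  case True
  then have "canon_index S = 1" by (simp add: canon_index_def)
  moreover have "decoded 1 = {0}"
    unfolding decoded_def by (auto simp: multiplicity_unit_right dest: prime_gt_1_nat)
  ultimately show ?thesis using True by simp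
next
  case False
  let ?m = "canon_index S" and ?xs = "sorted_list_of_set S"
  note F = sorted_list_facts[OF assms]
  have m0: "?m \<noteq> 0" using canon_index_pos[of S] by simp
  have card: "0 < card S" using False assms by (simp add: card_gt_0_iff)
  have "x \<in> decoded ?m" if "x \<in> S" for x
  proof -
    obtain i where i: "i < card S" "x = ?xs ! i"
      using \<open>x \<in> S\<close> F(1,2) by (metis in_set_conv_nth)
    have x: "x = multiplicity (nth_prime i) ?m"
      using multiplicity_nth_prime_canon_index[OF i(1)] i(2) by simp
    show ?thesis
    proof (cases "i = 0")
      case True
      then show ?thesis using x nth_prime_0 unfolding decoded_def by auto
    next
      case False
      then have "?xs ! 0 < ?xs ! i" using F i by (intro sorted_wrt_nth_less[OF F(3)]) auto
      then have "0 < multiplicity (nth_prime i) ?m" using x i(2) by simp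
      then have d: "nth_prime i dvd ?m" using not_dvd_imp_multiplicity_0 by fastforce
      then have "nth_prime i \<le> ?m" using m0 by (simp add: dvd_imp_le)
      then show ?thesis using d x nth_prime_prime unfolding decoded_def by blast
    qed
  qed
  moreover have "x \<in> S" if "x \<in> decoded ?m" for x
  proof -
    obtain p where p: "prime p" "p = 2 \<or> p dvd ?m" "x = multiplicity p ?m"
      using \<open>x \<in> decoded ?m\<close> two_is_prime_nat unfolding decoded_def by blast
    have "\<exists>i<card S. p = nth_prime i"
    proof (cases "p = 2")
      case True then show ?thesis using card nth_prime_0 by auto
    next
      case False
      then have pos: "0 < multiplicity p ?m"
        using p m0 power_dvd_iff_le_multiplicity[of ?m p 1] by (simp add: prime_nat_iff)
      show ?thesis
      proof (rule ccontr)
        assume "\<not> ?thesis"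
        then have "(\<Sum>i<card S. if p = nth_prime i then ?xs ! i else 0) = 0"
          by (intro sum.neutral) auto
        then show False using pos multiplicity_canon_index[OF p(1)] by simp
      qed
    qed
    then obtain i where i: "i < card S" "p = nth_prime i" by blast
    then have "x = ?xs ! i" using p(3) multiplicity_nth_prime_canon_index[OF i(1)] by simp
    then show ?thesis using i F(1,2) nth_mem[of i ?xs] by simp
  qed
  ultimately show ?thesis using False by auto
qed

lemma is_D_decoded:
  assumes "is_D m S"
  shows "S \<subseteq> decoded m" "card (decoded m) \<le> max 1 (card S)"
proof -
  have "finite S" "m = canon_index S" using assms unfolding is_D_def by auto
  then show "S \<subseteq> decoded m" "card (decoded m) \<le> max 1 (card S)"
    using decoded_canon_index by auto
qed

lemma canon_index_as_prod:
  assumes "finite S"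
  shows "canon_index S = (\<Prod>x\<in>S. nth_prime (card {y\<in>S. y < x}) ^ x)"
proof -
  let ?xs = "sorted_list_of_set S"
  note F = sorted_list_facts[OF assms]
  have bij: "bij_betw ((!) ?xs) {..<length ?xs} S"
    by (rule bij_betw_nth) (use F in \<open>simp_all add: strict_sorted_iff\<close>)
  have "card {y\<in>S. y < ?xs ! i} = i" if i: "i < length ?xs" for i
  proof -
    have "{y\<in>S. y < ?xs ! i} = (!) ?xs ` {..<i}"
    proof
      show "{y\<in>S. y < ?xs ! i} \<subseteq> (!) ?xs ` {..<i}"
      proof
        fix y assume y: "y \<in> {y\<in>S. y < ?xs ! i}"
        then obtain j where j: "j < length ?xs" "?xs ! j = y"
          using F(1) by (metis (no_types, lifting) in_set_conv_nth mem_Collect_eq)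
        have "j < i"
        proof (rule ccontr)
          assume "\<not> j < i"
          then have "?xs ! i \<le> ?xs ! j"
            using j(1) F(3) by (intro sorted_nth_mono) (simp_all add: strict_sorted_iff)
          then show False using y j(2) by simp
        qed
        then show "y \<in> (!) ?xs ` {..<i}" using j(2) by blast
      qed
      show "(!) ?xs ` {..<i} \<subseteq> {y\<in>S. y < ?xs ! i}"
        using sorted_wrt_nth_less[OF F(3) _ i] F(1) i by (auto intro: nth_mem)
    qed
    moreover have "inj_on ((!) ?xs) {..<i}"
      by (rule inj_on_nth) (use F i in \<open>auto simp: strict_sorted_iff\<close>)
    ultimately show ?thesis by (simp add: card_image)
  qed
  then have "(\<Prod>i<length ?xs. nth_prime (card {y\<in>S. y < ?xs ! i}) ^ (?xs ! i))
      = (\<Prod>i<length ?xs. nth_prime i ^ (?xs ! i))"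
    by (intro prod.cong) simp_all
  moreover have "(\<Prod>x\<in>S. nth_prime (card {y\<in>S. y < x}) ^ x)
      = (\<Prod>i<length ?xs. nth_prime (card {y\<in>S. y < ?xs ! i}) ^ (?xs ! i))"
    by (rule prod.reindex_bij_betw[OF bij, symmetric])
  ultimately show ?thesis unfolding canon_index_def using F(2) by simp
qed

lemma card_as_indicator_sum:
  fixes S :: "nat set"
  assumes "S \<subseteq> {..<b}"
  shows "card S = (\<Sum>x<b. if x \<in> S then 1 else 0)"
proof -
  have "(\<Sum>x<b. if x \<in> S then 1 else (0::nat)) = (\<Sum>x\<in>{..<b} \<inter> S. 1)"
    by (rule sum.inter_restrict[symmetric]) simp
  also have "{..<b} \<inter> S = S" using assms by auto
  finally show ?thesis by simp
qed

lemma canon_index_bounded: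
  assumes "S \<subseteq> {..<b}"
  shows "canon_index S
    = (\<Prod>x<b. if x \<in> S then nth_prime (\<Sum>y<x. if y \<in> S then 1 else 0) ^ x else 1)"
proof -
  have fin: "finite S" using assms finite_subset by blast
  have rank_eq: "(\<Sum>y<x. if y \<in> S then 1 else 0) = card {y\<in>S. y < x}" for x
    by (subst card_as_indicator_sum[of _ x]) (auto intro!: sum.cong)
  have "(\<Prod>x<b. if x \<in> S then nth_prime (\<Sum>y<x. if y \<in> S then 1 else 0) ^ x else 1)
      = (\<Prod>x\<in>{..<b} \<inter> S. nth_prime (card {y\<in>S. y < x}) ^ x)"
    unfolding rank_eq by (simp add: prod.inter_restrict)
  also have "{..<b} \<inter> S = S" using assms by auto
  finally show ?thesis using canon_index_as_prod[OF fin] by simp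
qed

lemma recfn_card:
  assumes "recpred h (Suc n) (\<lambda>zs. zs!0 \<in> S (tl zs))" "recfn h n B"
    and "\<And>xs. S xs \<subseteq> {..<B xs}"
  shows "recfn h n (\<lambda>xs. card (S xs))"
proof -
  have "recfn h n (\<lambda>xs. \<Sum>x<B xs. if x \<in> S xs then 1 else 0)"
    using assms(1,2) unfolding recpred_def by (rule recfn_sum)
  then show ?thesis by (rule recfn_cong) (simp add: card_as_indicator_sum[OF assms(3)])
qed

lemma recfn_canon_index:
  assumes mem: "recpred h (Suc n) (\<lambda>zs. zs!0 \<in> S (tl zs))" and "recfn h n B"
    and "\<And>xs. S xs \<subseteq> {..<B xs}"
  shows "recfn h n (\<lambda>xs. canon_index (S xs))"
proof -
  have "recfn h (Suc (Suc n)) (\<lambda>ws. if ws!0 \<in> S (tl (tl ws)) then 1 else 0)"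
    using recfn_skip_second[OF mem[unfolded recpred_def]] by simp
  then have rank: "recfn h (Suc n) (\<lambda>zs. \<Sum>y<zs!0. if y \<in> S (tl zs) then 1 else 0)"
    by (rule recfn_sum[where F="\<lambda>y zs. if y \<in> S (tl zs) then 1 else 0", OF _ recfn_proj]) simp
  have "recfn h (Suc n) (\<lambda>zs. if zs!0 \<in> S (tl zs)
           then nth_prime (\<Sum>y<zs!0. if y \<in> S (tl zs) then 1 else 0) ^ zs!0 else 1)"
    by (intro recfn_if mem recfn_pow recfn_nth_prime rank recfn_proj recfn_const) simp
  then have "recfn h n (\<lambda>xs. \<Prod>x<B xs. if x \<in> S xs
           then nth_prime (\<Sum>y<x. if y \<in> S xs then 1 else 0) ^ x else 1)"
    using assms(2) by (rule recfn_prod)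
  then show ?thesis by (rule recfn_cong) (simp add: canon_index_bounded[OF assms(3)])
qed

lemma recpred_decoded:
  assumes "recfn h n A" "recfn h n B"
  shows "recpred h n (\<lambda>xs. A xs \<in> decoded (B xs))"
proof -
  have exp2: "recpred h n (\<lambda>xs. A xs = multiplicity 2 (B xs))"
    by (intro recpred_eq recfn_multiplicity recfn_const assms)
  have "recpred h (Suc n) (\<lambda>zs. prime (zs!0) \<and> zs!0 dvd B (tl zs)
                              \<and> A (tl zs) = multiplicity (zs!0) (B (tl zs)))"
    by (intro recpred_conj recpred_prime recpred_dvd recpred_eq recfn_multiplicity
        recfn_proj recfn_tl assms) simp_all
  then have "recpred h n (\<lambda>xs. \<exists>p<Suc (B xs). prime p \<and> p dvd B xs \<and> A xs = multiplicity p (B xs))"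
    by (rule recpred_ex_less[where P="\<lambda>p xs. prime p \<and> p dvd B xs \<and> A xs = multiplicity p (B xs)",
          OF _ recfn_Suc[OF assms(2)]])
  with exp2 have "recpred h n (\<lambda>xs. A xs = multiplicity 2 (B xs)
      \<or> (\<exists>p<Suc (B xs). prime p \<and> p dvd B xs \<and> A xs = multiplicity p (B xs)))"
    by (rule recpred_disj)
  then show ?thesis unfolding decoded_def by (simp add: less_Suc_eq_le)
qed

lemma recfn_card_decoded:
  assumes "recfn h n A"
  shows "recfn h n (\<lambda>xs. card (decoded (A xs)))"
proof -
  have "recpred h (Suc n) (\<lambda>zs. zs!0 \<in> decoded (A (tl zs)))"
    by (rule recpred_decoded[OF recfn_proj recfn_tl[OF assms]]) simp
  then show ?thesis
    by (rule recfn_card[where S="\<lambda>xs. decoded (A xs)", OF _ recfn_Suc[OF assms] decoded_subset])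
qed

section \<open>The union of the small sets coded in a trace\<close>

text \<open>If T traces
  a code m of a set tracing x, then x lies in this union; the size restriction
  keeps the union small even though T may also contain codes of large sets.\<close>
definition small_union :: "nat \<Rightarrow> nat \<Rightarrow> nat set" where
  "small_union k T = (\<Union>m\<in>{m\<in>decoded T. card (decoded m) \<le> k}. decoded m)"

lemma mem_small_union_iff:
  "x \<in> small_union k T \<longleftrightarrow> (\<exists>m<Suc T. m \<in> decoded T \<and> card (decoded m) \<le> k \<and> x \<in> decoded m)"
  unfolding small_union_def using decoded_le by (auto simp: less_Suc_eq_le)

lemma small_union_subset: "small_union k T \<subseteq> {..<Suc T}"
  by (auto simp: mem_small_union_iff dest!: decoded_le)

lemma card_small_union:
  assumes "card (decoded T) \<le> k"
  shows "card (small_union k T) \<le> k * k"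
proof -
  let ?I = "{m\<in>decoded T. card (decoded m) \<le> k}"
  have fin: "finite ?I" using finite_decoded by simp
  have "card (small_union k T) \<le> (\<Sum>m\<in>?I. card (decoded m))"
    unfolding small_union_def by (rule card_UN_le[OF fin])
  also have "\<dots> \<le> (\<Sum>m\<in>?I. k)" by (rule sum_mono) simp
  also have "\<dots> = card ?I * k" by simp
  also have "\<dots> \<le> card (decoded T) * k"
    by (intro mult_le_mono1 card_mono finite_decoded) auto
  also have "\<dots> \<le> k * k" using assms by (rule mult_le_mono1)
  finally show ?thesis .
qed

lemma recfn_canon_index_small_union:
  assumes "recfn h n K" "recfn h n T"
  shows "recfn h n (\<lambda>xs. canon_index (small_union (K xs) (T xs)))"
proof -
  have T2: "recfn h (Suc (Suc n)) (\<lambda>ws. T (tl (tl ws)))" by (intro recfn_tl assms)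
  have K2: "recfn h (Suc (Suc n)) (\<lambda>ws. K (tl (tl ws)))" by (intro recfn_tl assms)
  have m: "recfn h (Suc (Suc n)) (\<lambda>ws. ws!0)" by (rule recfn_proj) simp
  have x: "recfn h (Suc (Suc n)) (\<lambda>ws. tl ws ! 0)" by (rule recfn_tl_nth) simp
  have "recpred h (Suc (Suc n)) (\<lambda>ws. ws!0 \<in> decoded (T (tl (tl ws)))
      \<and> card (decoded (ws!0)) \<le> K (tl (tl ws)) \<and> tl ws ! 0 \<in> decoded (ws!0))"
    by (intro recpred_conj recpred_decoded recpred_le recfn_card_decoded m x T2 K2)
  then have "recpred h (Suc n) (\<lambda>zs. \<exists>m<Suc (T (tl zs)). m \<in> decoded (T (tl zs))
      \<and> card (decoded m) \<le> K (tl zs) \<and> zs!0 \<in> decoded m)"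
    by (rule recpred_ex_less[where P="\<lambda>m zs. m \<in> decoded (T (tl zs))
      \<and> card (decoded m) \<le> K (tl zs) \<and> zs!0 \<in> decoded m", OF _ recfn_Suc[OF recfn_tl[OF assms(2)]]])
  then have "recpred h (Suc n) (\<lambda>zs. zs!0 \<in> small_union (K (tl zs)) (T (tl zs)))"
    by (simp only: mem_small_union_iff)
  then show ?thesis
    by (rule recfn_canon_index[where S="\<lambda>xs. small_union (K xs) (T xs)",
          OF _ recfn_Suc[OF assms(2)] small_union_subset])
qed

definition is_trace :: "(nat \<Rightarrow> nat) \<Rightarrow> (nat \<Rightarrow> nat) \<Rightarrow> (nat \<Rightarrow> nat) \<Rightarrow> bool" where
  "is_trace r \<phi> g \<longleftrightarrow> (\<forall>n. \<exists>S. is_D (r n) S \<and> card S \<le> \<phi> n \<and> g n \<in> S)"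

definition admissible_bound :: "(nat \<Rightarrow> nat) \<Rightarrow> bool" where
  "admissible_bound \<phi> \<longleftrightarrow> mono \<phi> \<and> (\<forall>k. \<exists>n. k \<le> \<phi> n) \<and> computable \<phi> \<and> (\<forall>n. 1 \<le> \<phi> n)"

lemma traceable_rel_iff:
  "traceable_rel h g \<longleftrightarrow> (\<forall>\<phi> g'. admissible_bound \<phi> \<and> computable_in g g'
      \<longrightarrow> (\<exists>r. computable_in h r \<and> is_trace r \<phi> g'))"
  unfolding traceable_rel_def admissible_bound_def is_trace_def by (simp only: conj_assoc)

lemma admissible_isqrt:
  assumes "admissible_bound \<phi>"
  shows "admissible_bound (\<lambda>n. isqrt (\<phi> n))"
  unfolding admissible_bound_def
proof (intro conjI allI)
  show "mono (\<lambda>n. isqrt (\<phi> n))"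
    using assms unfolding admissible_bound_def by (intro monoI isqrt_mono) (simp add: monoD)
  show "\<exists>n. k \<le> isqrt (\<phi> n)" for k
    using assms isqrt_greatest unfolding admissible_bound_def by meson
  have "recfn (\<lambda>_. 0) 1 (\<lambda>xs. isqrt (\<phi> (xs!0)))"
    using assms unfolding admissible_bound_def by (intro recfn_isqrt computable_imp_recfn) simp
  then show "computable (\<lambda>n. isqrt (\<phi> n))"
    unfolding computable_def computable_in_iff_recfn by simp
  show "1 \<le> isqrt (\<phi> n)" for n
    using assms isqrt_greatest[of 1] unfolding admissible_bound_def by simp
qed

lemma is_trace_mono: "is_trace r \<phi> g \<Longrightarrow> (\<And>n. \<phi> n \<le> \<phi>' n) \<Longrightarrow> is_trace r \<phi>' g"
  unfolding is_trace_def using le_trans by blast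

lemma small_union_of_traces:
  assumes "1 \<le> k" "is_D m1 S1" "card S1 \<le> k" "x \<in> S1" "is_D m2 S2" "card S2 \<le> k" "m1 \<in> S2"
  shows "x \<in> small_union k m2" "card (small_union k m2) \<le> k * k"
proof -
  have "card (decoded m1) \<le> k" using is_D_decoded(2)[OF assms(2)] assms(1,3) by simp
  then show "x \<in> small_union k m2"
    using is_D_decoded(1)[OF assms(2)] is_D_decoded(1)[OF assms(5)] assms(4,7)
    unfolding small_union_def by blast
  have "card (decoded m2) \<le> k" using is_D_decoded(2)[OF assms(5)] assms(1,6) by simp
  then show "card (small_union k m2) \<le> k * k" by (rule card_small_union)
qed

lemma is_trace_small_union:
  assumes "\<forall>n. 1 \<le> \<psi> n" "is_trace r1 \<psi> g" "is_trace r2 \<psi> r1"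
  shows "is_trace (\<lambda>n. canon_index (small_union (\<psi> n) (r2 n))) (\<lambda>n. \<psi> n * \<psi> n) g"
  unfolding is_trace_def
proof
  fix n
  obtain S1 where "is_D (r1 n) S1" "card S1 \<le> \<psi> n" "g n \<in> S1"
    using assms(2) unfolding is_trace_def by blast
  moreover obtain S2 where "is_D (r2 n) S2" "card S2 \<le> \<psi> n" "r1 n \<in> S2"
    using assms(3) unfolding is_trace_def by blast
  ultimately have "g n \<in> small_union (\<psi> n) (r2 n)" "card (small_union (\<psi> n) (r2 n)) \<le> \<psi> n * \<psi> n"
    using small_union_of_traces assms(1) by blast+
  moreover have "is_D (canon_index (small_union (\<psi> n) (r2 n))) (small_union (\<psi> n) (r2 n))"
    unfolding is_D_def using small_union_subset finite_subset by blast
  ultimately show "\<exists>S. is_D (canon_index (small_union (\<psi> n) (r2 n))) S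
      \<and> card S \<le> \<psi> n * \<psi> n \<and> g n \<in> S" by blast
qed

lemma computable_in_small_union_code:
  assumes "computable \<psi>" "computable_in h r2"
  shows "computable_in h (\<lambda>n. canon_index (small_union (\<psi> n) (r2 n)))"
  unfolding computable_in_iff_recfn
  using recfn_canon_index_small_union[OF computable_imp_recfn[OF assms(1)]
      assms(2)[unfolded computable_in_iff_recfn]] .

lemma traceable_rel_trans:
  assumes hf: "traceable_rel h f" and fg: "traceable_rel f g"
  shows "traceable_rel h g"
  unfolding traceable_rel_iff
proof (intro allI impI, elim conjE)
  fix \<phi> g' assume \<phi>: "admissible_bound \<phi>" and g': "computable_in g g'"
  define \<psi> where "\<psi> n = isqrt (\<phi> n)" for n
  have \<psi>: "admissible_bound \<psi>" unfolding \<psi>_def using \<phi> by (rule admissible_isqrt)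
  then have \<psi>_pos: "\<forall>n. 1 \<le> \<psi> n" and \<psi>_comp: "computable \<psi>"
    unfolding admissible_bound_def by simp_all
  obtain r1 where r1: "computable_in f r1" "is_trace r1 \<psi> g'"
    using fg[unfolded traceable_rel_iff, rule_format, OF conjI[OF \<psi> g']] by blast
  obtain r2 where r2: "computable_in h r2" "is_trace r2 \<psi> r1"
    using hf[unfolded traceable_rel_iff, rule_format, OF conjI[OF \<psi> r1(1)]] by blast
  let ?r = "\<lambda>n. canon_index (small_union (\<psi> n) (r2 n))"
  have "is_trace ?r (\<lambda>n. \<psi> n * \<psi> n) g'"
    by (rule is_trace_small_union[OF \<psi>_pos r1(2) r2(2)])
  then have "is_trace ?r \<phi> g'" by (rule is_trace_mono) (simp add: \<psi>_def isqrt_sq_le)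
  moreover have "computable_in h ?r"
    by (rule computable_in_small_union_code[OF \<psi>_comp r2(1)])
  ultimately show "\<exists>r. computable_in h r \<and> is_trace r \<phi> g'" by blast
qed

theorem mainTheorem4:
  fixes f g :: "nat \<Rightarrow> nat"
  assumes "computably_traceable f"
    and "traceable_rel f g"
  shows "computably_traceable g"
proof -
  obtain h where "computable h" "traceable_rel h f"
    using assms(1) unfolding computably_traceable_def by blast
  with assms(2) show ?thesis
    unfolding computably_traceable_def by (blast intro: traceable_rel_trans)
qed

end
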